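(* For $\mathfrak g=A_2$ and every $n\in\mathbb N$, $S_{n\lambda_1,2}=\mathcal L_{n\lambda_1,2}\cap P_{2n\lambda_1}$.
   Context: $A_2=\mathfrak{sl}_3$ with simple roots $\alpha_1,\alpha_2$, fundamental weights $\lambda_1,\lambda_2$, weight lattice $\Lambda$, root lattice $\Lambda_r$, dominant weights $\Lambda^+$, Weyl group $W$, $\rho=\lambda_1+\lambda_2$. $\Pi_\lambda$ is the set of weights of $V_\lambda$; $S_{\lambda,a}=[\bigcup_{\sigma\in W}(\sigma(\rho)-\rho+a\Pi_\lambda)]\cap\Lambda^+$; $\mathcal L_{\lambda,a}=\bigcup_{\sigma\in W}(a\lambda+\sigma(\rho)-\rho+a\Lambda_r)$; $P_\lambda$ is the convex hull of $\Pi_\lambda\cap\Lambda^+$ (so $\mathcal L_{\lambda,a}\cap P_{a\lambda}$ is a set of weights). *)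

theory Defs
  imports "HOL-Analysis.Analysis"
begin

text \<open>Weights of A2 = sl3 in the basis of fundamental weights:
  the pair (a,b) stands for a*lambda1 + b*lambda2.\<close>

type_synonym wt = "int \<times> int"

definition wadd :: "wt \<Rightarrow> wt \<Rightarrow> wt" where
  "wadd x y = (fst x + fst y, snd x + snd y)"

definition wsub :: "wt \<Rightarrow> wt \<Rightarrow> wt" where
  "wsub x y = (fst x - fst y, snd x - snd y)"

definition wsc :: "int \<Rightarrow> wt \<Rightarrow> wt" where
  "wsc k x = (k * fst x, k * snd x)"

definition lambda1 :: wt where "lambda1 = (1, 0)"
definition lambda2 :: wt where "lambda2 = (0, 1)"
definition rho :: wt where "rho = wadd lambda1 lambda2"

text \<open>Simple roots: alpha1 = 2 lambda1 - lambda2, alpha2 = -lambda1 + 2 lambda2 (Cartan matrix).\<close>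
definition alpha1 :: wt where "alpha1 = (2, -1)"
definition alpha2 :: wt where "alpha2 = (-1, 2)"

text \<open>Simple reflections s_i(mu) = mu - <mu, alpha_i^vee> alpha_i.\<close>
definition s1 :: "wt \<Rightarrow> wt" where "s1 mu = wsub mu (wsc (fst mu) alpha1)"
definition s2 :: "wt \<Rightarrow> wt" where "s2 mu = wsub mu (wsc (snd mu) alpha2)"

inductive_set weyl :: "(wt \<Rightarrow> wt) set" where
  weyl_id: "id \<in> weyl"
| weyl_s1: "w \<in> weyl \<Longrightarrow> s1 \<circ> w \<in> weyl"
| weyl_s2: "w \<in> weyl \<Longrightarrow> s2 \<circ> w \<in> weyl"

definition root_lattice :: "wt set" where
  "root_lattice = {wadd (wsc m alpha1) (wsc k alpha2) | m k. True}"

definition pos_root_cone :: "wt set" where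
  "pos_root_cone = {wadd (wsc (int m) alpha1) (wsc (int k) alpha2) | m k. True}"

definition dominant :: "wt set" where
  "dominant = {mu. fst mu \<ge> 0 \<and> snd mu \<ge> 0}"

text \<open>Pi lambda: the set of weights of the irreducible module V_lambda (lambda dominant),
  via the standard characterization: mu is a weight iff mu is congruent to lambda
  modulo the root lattice and every W-conjugate of mu lies below lambda in the
  dominance order.\<close>
definition Pi_wt :: "wt \<Rightarrow> wt set" where
  "Pi_wt lam = {mu. wsub mu lam \<in> root_lattice \<and>
                    (\<forall>\<sigma>\<in>weyl. wsub lam (\<sigma> mu) \<in> pos_root_cone)}"

definition emb :: "wt \<Rightarrow> real \<times> real" where
  "emb mu = (real_of_int (fst mu), real_of_int (snd mu))"

definition P_hull :: "wt \<Rightarrow> (real \<times> real) set" where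
  "P_hull lam = convex hull (emb ` (Pi_wt lam \<inter> dominant))"

definition S_set :: "wt \<Rightarrow> int \<Rightarrow> wt set" where
  "S_set lam a = (\<Union>\<sigma>\<in>weyl. {wadd (wsub (\<sigma> rho) rho) (wsc a mu) | mu. mu \<in> Pi_wt lam})
                 \<inter> dominant"

definition L_set :: "wt \<Rightarrow> int \<Rightarrow> wt set" where
  "L_set lam a = (\<Union>\<sigma>\<in>weyl. {wadd (wadd (wsc a lam) (wsub (\<sigma> rho) rho)) (wsc a nu) | nu. nu \<in> root_lattice})"

end

theory Submission
  imports Defs
begin

(* In fundamental-weight coordinates the Weyl group consists of six explicit maps, and the
  shifts sigma(rho) - rho are (0,0), (-2,1), (1,-2), (-3,0), (0,-3), (-2,-2): they lie in the
  root lattice, satisfy c1 + 2 c2 <= 0, and represent exactly the three classes of the weight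
  lattice modulo 2 other than the class of rho = (1,1).  The dominant weights of V_{N lambda1}
  are the points x, y >= 0 with x + 2y <= N and x + 2y = N mod 3, and P_{N lambda1} lies in
  the triangle x, y >= 0, x + 2y <= N.  Hence both sides of the theorem are the dominant weights
  of V_{2n lambda1} whose coordinates are not both odd; for the reverse inclusions such a weight
  is split as sigma(rho) - rho + 2m, choosing sigma by the parities of its coordinates. *)

lemma wadd_Pair [simp]: "wadd (a, b) (c, d) = (a + c, b + d)"
  by (simp add: wadd_def)

lemma wsub_Pair [simp]: "wsub (a, b) (c, d) = (a - c, b - d)"
  by (simp add: wsub_def)

lemma wsc_Pair [simp]: "wsc k (a, b) = (k * a, k * b)"
  by (simp add: wsc_def)

lemma s1_Pair [simp]: "s1 (a, b) = (- a, a + b)"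
  by (simp add: s1_def alpha1_def)

lemma s2_Pair [simp]: "s2 (a, b) = (a + b, - b)"
  by (simp add: s2_def alpha2_def)

lemma s1_in_weyl: "s1 \<in> weyl"
  and s2_in_weyl: "s2 \<in> weyl"
  using weyl_s1[OF weyl_id] weyl_s2[OF weyl_id] by simp_all

lemma weyl_explicit: "weyl = {id, s1, s2, s1 \<circ> s2, s2 \<circ> s1, s1 \<circ> s2 \<circ> s1}"
proof
  show "weyl \<subseteq> {id, s1, s2, s1 \<circ> s2, s2 \<circ> s1, s1 \<circ> s2 \<circ> s1}"
  proof
    fix \<sigma> assume "\<sigma> \<in> weyl"
    then show "\<sigma> \<in> {id, s1, s2, s1 \<circ> s2, s2 \<circ> s1, s1 \<circ> s2 \<circ> s1}"
      by induction (auto simp: fun_eq_iff split_paired_All)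
  qed
  show "{id, s1, s2, s1 \<circ> s2, s2 \<circ> s1, s1 \<circ> s2 \<circ> s1} \<subseteq> weyl"
    using s1_in_weyl s2_in_weyl by (auto intro: weyl.intros simp: comp_assoc)
qed

lemma rho_eq: "rho = (1, 1)"
  by (simp add: rho_def lambda1_def lambda2_def)

lemma rho_shifts_weyl:
  "(\<lambda>\<sigma>. wsub (\<sigma> rho) rho) ` weyl = {(0, 0), (-2, 1), (1, -2), (-3, 0), (0, -3), (-2, -2)}"
  by (simp add: weyl_explicit rho_eq)

lemma rho_shift_properties:
  assumes "\<sigma> \<in> weyl" and "wsub (\<sigma> rho) rho = (c1, c2)"
  shows "c1 + 2 * c2 \<le> 0" and "3 dvd (c1 + 2 * c2)" and "\<not> (odd c1 \<and> odd c2)"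
proof -
  have "(c1, c2) \<in> (\<lambda>\<sigma>. wsub (\<sigma> rho) rho) ` weyl"
    using assms by (metis image_eqI)
  then have "(c1, c2) \<in> {(0, 0), (-2, 1), (1, -2), (-3, 0), (0, -3), (-2, -2)}"
    by (simp only: rho_shifts_weyl)
  then show "c1 + 2 * c2 \<le> 0" and "3 dvd (c1 + 2 * c2)" and "\<not> (odd c1 \<and> odd c2)"
    by auto
qed

lemma pos_root_cone_iff:
  "(x, y) \<in> pos_root_cone \<longleftrightarrow> 0 \<le> 2 * x + y \<and> 0 \<le> x + 2 * y \<and> 3 dvd (x + 2 * y)"
proof
  assume "(x, y) \<in> pos_root_cone"
  then obtain m k :: nat where "(x, y) = wadd (wsc (int m) alpha1) (wsc (int k) alpha2)"
    unfolding pos_root_cone_def by blast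
  then have "x = 2 * int m - int k" "y = 2 * int k - int m"
    by (simp_all add: alpha1_def alpha2_def)
  then show "0 \<le> 2 * x + y \<and> 0 \<le> x + 2 * y \<and> 3 dvd (x + 2 * y)"
    by presburger
next
  assume xy: "0 \<le> 2 * x + y \<and> 0 \<le> x + 2 * y \<and> 3 dvd (x + 2 * y)"
  then have "3 dvd (2 * x + y)"
    by presburger
  with xy have "(x, y) = wadd (wsc (int (nat ((2 * x + y) div 3))) alpha1)
                               (wsc (int (nat ((x + 2 * y) div 3))) alpha2)"
    by (auto simp: alpha1_def alpha2_def)
  then show "(x, y) \<in> pos_root_cone"
    unfolding pos_root_cone_def by blast
qed

lemma root_lattice_iff: "(x, y) \<in> root_lattice \<longleftrightarrow> 3 dvd (x + 2 * y)"
proof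
  assume "(x, y) \<in> root_lattice"
  then obtain m k where "(x, y) = wadd (wsc m alpha1) (wsc k alpha2)"
    unfolding root_lattice_def by blast
  then have "x = 2 * m - k" "y = 2 * k - m"
    by (simp_all add: alpha1_def alpha2_def)
  then show "3 dvd (x + 2 * y)"
    by presburger
next
  assume xy: "3 dvd (x + 2 * y)"
  then have "3 dvd (2 * x + y)"
    by presburger
  with xy have "(x, y) = wadd (wsc ((2 * x + y) div 3) alpha1) (wsc ((x + 2 * y) div 3) alpha2)"
    by (auto simp: alpha1_def alpha2_def)
  then show "(x, y) \<in> root_lattice"
    unfolding root_lattice_def by blast
qed

lemma Pi_wt_multiple_lambda1D:
  assumes "(x, y) \<in> Pi_wt (N, 0)"
  shows "x + 2 * y \<le> N" and "3 dvd (x + 2 * y - N)"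
proof -
  have "wsub (N, 0) (id (x, y)) \<in> pos_root_cone" and "wsub (x, y) (N, 0) \<in> root_lattice"
    using assms weyl_id unfolding Pi_wt_def by auto
  then show "x + 2 * y \<le> N" and "3 dvd (x + 2 * y - N)"
    by (simp_all add: pos_root_cone_iff root_lattice_iff) presburger+
qed

lemma Pi_wt_multiple_lambda1I:
  assumes "0 \<le> x" "0 \<le> y" "x + 2 * y \<le> N" "3 dvd (x + 2 * y - N)"
  shows "(x, y) \<in> Pi_wt (N, 0)"
  unfolding Pi_wt_def
proof (simp add: root_lattice_iff, intro conjI ballI)
  show "3 dvd (x - N + 2 * y)"
    using assms(4) by presburger
  fix \<sigma> assume "\<sigma> \<in> weyl"
  then show "wsub (N, 0) (\<sigma> (x, y)) \<in> pos_root_cone"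
    using assms by (auto simp: weyl_explicit pos_root_cone_iff) presburger+
qed

lemma emb_in_P_hull_multiple_lambda1D:
  assumes "emb (x, y) \<in> P_hull (N, 0)"
  shows "0 \<le> x \<and> 0 \<le> y \<and> x + 2 * y \<le> N"
proof -
  define triangle where "triangle = {p :: real \<times> real. inner (-1, 0) p \<le> 0}
    \<inter> {p. inner (0, -1) p \<le> 0} \<inter> {p. inner (1, 2) p \<le> real_of_int N}"
  have "convex triangle"
    unfolding triangle_def by (intro convex_Int convex_halfspace_le)
  moreover have "emb ` (Pi_wt (N, 0) \<inter> dominant) \<subseteq> triangle"
  proof
    fix p assume "p \<in> emb ` (Pi_wt (N, 0) \<inter> dominant)"
    then obtain a b where "(a, b) \<in> Pi_wt (N, 0)" "0 \<le> a" "0 \<le> b" "p = emb (a, b)"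
      by (auto simp: dominant_def)
    moreover from this have "real_of_int a + 2 * real_of_int b \<le> real_of_int N"
      using Pi_wt_multiple_lambda1D(1) by (metis of_int_add of_int_le_iff of_int_mult of_int_numeral)
    ultimately show "p \<in> triangle"
      by (simp add: triangle_def emb_def inner_Pair)
  qed
  ultimately have "P_hull (N, 0) \<subseteq> triangle"
    unfolding P_hull_def by (rule hull_minimal[rotated])
  with assms have "0 \<le> real_of_int x" "0 \<le> real_of_int y"
      "real_of_int x + 2 * real_of_int y \<le> real_of_int N"
    by (auto simp: triangle_def emb_def inner_Pair)
  then show ?thesis
    by linarith
qed

lemma rho_shift_decomposition:
  assumes "\<mu> \<in> Pi_wt (2 * N, 0) \<inter> dominant" and "\<not> (odd (fst \<mu>) \<and> odd (snd \<mu>))"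
  obtains \<sigma> m where "\<sigma> \<in> weyl" "m \<in> Pi_wt (N, 0)" "\<mu> = wadd (wsub (\<sigma> rho) rho) (wsc 2 m)"
proof -
  obtain a b where \<mu>: "\<mu> = (a, b)"
    by fastforce
  have a: "0 \<le> a" and b: "0 \<le> b" and le: "a + 2 * b \<le> 2 * N" and dvd: "3 dvd (a + 2 * b - 2 * N)"
    using assms(1) Pi_wt_multiple_lambda1D by (auto simp: \<mu> dominant_def)
  from assms(2) consider "even a" "even b" | "even a" "odd b" | "odd a" "even b"
    unfolding \<mu> by fastforce
  then show thesis
  proof cases
    case 1
    have "(a div 2, b div 2) \<in> Pi_wt (N, 0)"
      by (rule Pi_wt_multiple_lambda1I) (use 1 a b le dvd in presburger)+
    moreover have "\<mu> = wadd (wsub (id rho) rho) (wsc 2 (a div 2, b div 2))"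
      using 1 by (simp add: \<mu> rho_eq)
    ultimately show thesis
      using that weyl_id by blast
  next
    case 2
    have "(a div 2 + 1, b div 2) \<in> Pi_wt (N, 0)"
      by (rule Pi_wt_multiple_lambda1I) (use 2 a b le dvd in presburger)+
    moreover have "\<mu> = wadd (wsub (s1 rho) rho) (wsc 2 (a div 2 + 1, b div 2))"
      using 2 by (simp add: \<mu> rho_eq) presburger
    ultimately show thesis
      using that s1_in_weyl by blast
  next
    case 3
    \<comment> \<open>here a + 2 b is odd, so the congruence forces a + 2 b \<le> 2 N - 3\<close>
    have "(a div 2, b div 2 + 1) \<in> Pi_wt (N, 0)"
      by (rule Pi_wt_multiple_lambda1I) (use 3 a b le dvd in presburger)+
    moreover have "\<mu> = wadd (wsub (s2 rho) rho) (wsc 2 (a div 2, b div 2 + 1))"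
      using 3 by (simp add: \<mu> rho_eq) presburger
    ultimately show thesis
      using that s2_in_weyl by blast
  qed
qed

lemma S_set_multiple_lambda1_double:
  "S_set (N, 0) 2 = {\<mu> \<in> Pi_wt (2 * N, 0) \<inter> dominant. \<not> (odd (fst \<mu>) \<and> odd (snd \<mu>))}"
proof (intro set_eqI iffI)
  fix \<mu> assume "\<mu> \<in> S_set (N, 0) 2"
  then obtain \<sigma> x y where \<sigma>: "\<sigma> \<in> weyl" and xy: "(x, y) \<in> Pi_wt (N, 0)"
      and \<mu>: "\<mu> = wadd (wsub (\<sigma> rho) rho) (wsc 2 (x, y))" and dom: "\<mu> \<in> dominant"
    unfolding S_set_def by auto
  obtain c1 c2 where c: "wsub (\<sigma> rho) rho = (c1, c2)"
    by fastforce
  note shift = rho_shift_properties[OF \<sigma> c] and bound = Pi_wt_multiple_lambda1D[OF xy]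
  have "0 \<le> c1 + 2 * x" "0 \<le> c2 + 2 * y"
    using dom by (simp_all add: \<mu> c dominant_def)
  then have "(c1 + 2 * x, c2 + 2 * y) \<in> Pi_wt (2 * N, 0)"
    by (rule Pi_wt_multiple_lambda1I) (use shift(1,2) bound in presburger)+
  moreover have "\<not> (odd (c1 + 2 * x) \<and> odd (c2 + 2 * y))"
    using shift(3) by simp
  ultimately show "\<mu> \<in> {\<mu> \<in> Pi_wt (2 * N, 0) \<inter> dominant. \<not> (odd (fst \<mu>) \<and> odd (snd \<mu>))}"
    using dom by (simp add: \<mu> c)
next
  fix \<mu> assume "\<mu> \<in> {\<mu> \<in> Pi_wt (2 * N, 0) \<inter> dominant. \<not> (odd (fst \<mu>) \<and> odd (snd \<mu>))}"
  then have \<mu>: "\<mu> \<in> Pi_wt (2 * N, 0) \<inter> dominant" "\<not> (odd (fst \<mu>) \<and> odd (snd \<mu>))"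
    by simp_all
  then obtain \<sigma> m where "\<sigma> \<in> weyl" "m \<in> Pi_wt (N, 0)" "\<mu> = wadd (wsub (\<sigma> rho) rho) (wsc 2 m)"
    by (rule rho_shift_decomposition)
  with \<mu>(1) show "\<mu> \<in> S_set (N, 0) 2"
    unfolding S_set_def by blast
qed

lemma L_set_multiple_lambda1_double_Int_P_hull:
  "L_set (N, 0) 2 \<inter> {\<mu>. emb \<mu> \<in> P_hull (2 * N, 0)} =
   {\<mu> \<in> Pi_wt (2 * N, 0) \<inter> dominant. \<not> (odd (fst \<mu>) \<and> odd (snd \<mu>))}"
proof (intro set_eqI iffI)
  fix \<mu> assume "\<mu> \<in> L_set (N, 0) 2 \<inter> {\<mu>. emb \<mu> \<in> P_hull (2 * N, 0)}"
  then obtain \<sigma> \<nu> where \<sigma>: "\<sigma> \<in> weyl" and \<nu>: "\<nu> \<in> root_lattice"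
      and decomp: "\<mu> = wadd (wadd (wsc 2 (N, 0)) (wsub (\<sigma> rho) rho)) (wsc 2 \<nu>)"
      and hull: "emb \<mu> \<in> P_hull (2 * N, 0)"
    unfolding L_set_def by blast
  obtain a b p q where ab: "\<mu> = (a, b)" and pq: "\<nu> = (p, q)"
    by fastforce
  obtain c1 c2 where c: "wsub (\<sigma> rho) rho = (c1, c2)"
    by fastforce
  have shift: "3 dvd (c1 + 2 * c2)" "\<not> (odd c1 \<and> odd c2)"
    using rho_shift_properties[OF \<sigma> c] by simp_all
  have region: "0 \<le> a \<and> 0 \<le> b \<and> a + 2 * b \<le> 2 * N"
    using emb_in_P_hull_multiple_lambda1D hull ab by simp
  have coords: "a = 2 * N + c1 + 2 * p" "b = c2 + 2 * q"
    using decomp by (simp_all add: ab pq c)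
  have "3 dvd (a + 2 * b - 2 * N)"
    using coords shift(1) \<nu> by (simp add: pq root_lattice_iff) presburger
  with region have "(a, b) \<in> Pi_wt (2 * N, 0)"
    by (auto intro: Pi_wt_multiple_lambda1I)
  moreover have "\<not> (odd a \<and> odd b)"
    using coords shift(2) by simp
  ultimately show "\<mu> \<in> {\<mu> \<in> Pi_wt (2 * N, 0) \<inter> dominant. \<not> (odd (fst \<mu>) \<and> odd (snd \<mu>))}"
    using region by (simp add: ab dominant_def)
next
  fix \<mu> assume "\<mu> \<in> {\<mu> \<in> Pi_wt (2 * N, 0) \<inter> dominant. \<not> (odd (fst \<mu>) \<and> odd (snd \<mu>))}"
  then have \<mu>: "\<mu> \<in> Pi_wt (2 * N, 0) \<inter> dominant" "\<not> (odd (fst \<mu>) \<and> odd (snd \<mu>))"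
    by simp_all
  then obtain \<sigma> m where \<sigma>: "\<sigma> \<in> weyl" and m: "m \<in> Pi_wt (N, 0)"
      and decomp: "\<mu> = wadd (wsub (\<sigma> rho) rho) (wsc 2 m)"
    by (rule rho_shift_decomposition)
  have "wsub m (N, 0) \<in> root_lattice"
    using m unfolding Pi_wt_def by blast
  moreover have "\<mu> = wadd (wadd (wsc 2 (N, 0)) (wsub (\<sigma> rho) rho)) (wsc 2 (wsub m (N, 0)))"
    using decomp by (simp add: wadd_def wsub_def wsc_def)
  ultimately have "\<mu> \<in> L_set (N, 0) 2"
    unfolding L_set_def using \<sigma> by blast
  moreover have "emb \<mu> \<in> P_hull (2 * N, 0)"
    using \<mu>(1) unfolding P_hull_def by (intro hull_inc) auto
  ultimately show "\<mu> \<in> L_set (N, 0) 2 \<inter> {\<mu>. emb \<mu> \<in> P_hull (2 * N, 0)}"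
    by simp
qed

theorem mainTheorem12:
  fixes n :: nat
  shows "S_set (wsc (int n) lambda1) 2 =
         L_set (wsc (int n) lambda1) 2 \<inter> {mu. emb mu \<in> P_hull (wsc (2 * int n) lambda1)}"
proof -
  have "wsc (int n) lambda1 = (int n, 0)" and "wsc (2 * int n) lambda1 = (2 * int n, 0)"
    by (simp_all add: lambda1_def)
  then show ?thesis
    by (simp only: S_set_multiple_lambda1_double L_set_multiple_lambda1_double_Int_P_hull)
qed

end
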